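(* Let $M$ be the commutative monoid with zero defined below. For every right congruence $\rho$ of finite index on $M$ with $\mathcal{L}\subseteq\rho$ we have $(d,e)\in\rho$, although $(d,e)\notin\mathcal{L}$. Consequently the action of $M$ on its $\mathcal{L}$-classes is not residually finite.
   Context: Let $\tau:\mathbb{Z}\setminus\{0\}\to\mathbb{Z}$, $\tau(2^k(2r+1))=\frac{2}{3}(2^{2\lceil k/2\rceil}-1)$ ($k,r\in\mathbb{Z}$, $k\ge0$). Let $M$ be the commutative monoid with zero $0$ given by generators $a,a^{-1},b_i,c_i$ ($i\in\mathbb{Z}$), $d,e$ and relations $aa^{-1}=a^{-1}a=1$; $b_ic_j=d$ if $i=j$ and $b_ic_j=a^{\tau(j-i)}e$ if $i\neq j$; and $b_ib_j=b_id=b_ie=c_jc_k=c_jd=c_je=dd=de=ee=0$ for all $i,j,k\in\mathbb{Z}$. Its elements have distinct normal forms $a^p$, $a^pb_i$, $a^pc_i$, $a^pd$, $a^pe$ ($p,i\in\mathbb{Z}$) and $0$. $x\mathcal{L}y$ iff $Mx=My$; $M$ acts on $M/\mathcal{L}$ by $L_x\cdot m=L_{xm}$; this action is residually finite iff for all $(s,t)\notin\mathcal{L}$ there is a finite-index right congruence containing $\mathcal{L}$ but not $(s,t)$. *)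

theory Defs
  imports "HOL-Computational_Algebra.Primes"
begin

text \<open>tau(2^k(2r+1)) = 2/3 (2^(2 ceil(k/2)) - 1); here k is the 2-adic valuation of n.
  Note 2^(2 ceil(k/2)) = 4^((k+1) div 2), and 3 divides 4^m - 1, so the division is exact.\<close>
definition tau :: "int \<Rightarrow> int" where
  "tau n = (2 * (4 ^ ((multiplicity (2::int) n + 1) div 2) - 1)) div 3"

text \<open>Normal forms: Zero, or a^p x with x one of 1, b_i, c_i, d, e.\<close>
datatype gen = One | Bg int | Cg int | Dg | Eg

datatype M = Zero | Elt int gen

text \<open>Product of the non-a parts: Some (r, z) means a^r z, None means 0.\<close>
fun mulg :: "gen \<Rightarrow> gen \<Rightarrow> (int \<times> gen) option" where
  "mulg One y = Some (0, y)"
| "mulg x One = Some (0, x)"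
| "mulg (Bg i) (Cg j) = (if i = j then Some (0, Dg) else Some (tau (j - i), Eg))"
| "mulg (Cg j) (Bg i) = (if i = j then Some (0, Dg) else Some (tau (j - i), Eg))"
| "mulg _ _ = None"

fun mult :: "M \<Rightarrow> M \<Rightarrow> M" where
  "mult Zero _ = Zero"
| "mult _ Zero = Zero"
| "mult (Elt p x) (Elt q y) =
     (case mulg x y of None \<Rightarrow> Zero | Some (r, z) \<Rightarrow> Elt (p + q + r) z)"

abbreviation d_el :: M where "d_el \<equiv> Elt 0 Dg"
abbreviation e_el :: M where "e_el \<equiv> Elt 0 Eg"

definition Lrel :: "(M \<times> M) set" where
  "Lrel = {(x, y). range (\<lambda>m. mult m x) = range (\<lambda>m. mult m y)}"

definition right_congruence :: "(M \<times> M) set \<Rightarrow> bool" where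
  "right_congruence \<rho> \<longleftrightarrow> equiv UNIV \<rho> \<and> (\<forall>x y z. (x, y) \<in> \<rho> \<longrightarrow> (mult x z, mult y z) \<in> \<rho>)"

definition finite_index :: "(M \<times> M) set \<Rightarrow> bool" where
  "finite_index \<rho> \<longleftrightarrow> finite (UNIV // \<rho>)"

definition L_action_residually_finite :: bool where
  "L_action_residually_finite \<longleftrightarrow>
     (\<forall>s t. (s, t) \<notin> Lrel \<longrightarrow>
        (\<exists>\<rho>. right_congruence \<rho> \<and> finite_index \<rho> \<and> Lrel \<subseteq> \<rho> \<and> (s, t) \<notin> \<rho>))"

end

theory Submission
  imports Defs
begin

(* The elements a^p are units, so a^q y and y always generate the same
   left ideal: every element is L-related to its "a-free" part.  Now let rho be a
   right congruence of finite index containing L.  Among the infinitely many elements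
   b_i two distinct ones, b_i and b_j, lie in the same rho-class (pigeonhole).
   Multiplying on the right by c_i gives  d = b_i c_i  rho  b_j c_i = a^tau(i-j) e,
   and a^tau(i-j) e  L  e, so (d, e) is in rho.  On the other hand (d, e) is not in L,
   since the left ideal M e consists of 0 and the elements a^r e, and does not contain d. *)

text \<open>Left multiplication by the unit a^q: it shifts the a-exponent.\<close>

fun shift :: "int \<Rightarrow> M \<Rightarrow> M" where
  "shift q Zero = Zero"
| "shift q (Elt p x) = Elt (p + q) x"

lemma mult_Elt_shift: "mult m (Elt q y) = mult (shift q m) (Elt 0 y)"
  by (cases m) (auto split: option.splits)

lemma shift_inverse: "shift q (shift (- q) m) = m"
  by (cases m) auto

text \<open>Since a^q is a unit, a^q y and y generate the same principal left ideal.\<close>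

lemma left_ideal_shift: "range (\<lambda>m. mult m (Elt q y)) = range (\<lambda>m. mult m (Elt 0 y))"
proof
  show "range (\<lambda>m. mult m (Elt q y)) \<subseteq> range (\<lambda>m. mult m (Elt 0 y))"
    using mult_Elt_shift by auto
  show "range (\<lambda>m. mult m (Elt 0 y)) \<subseteq> range (\<lambda>m. mult m (Elt q y))"
  proof
    fix z assume "z \<in> range (\<lambda>m. mult m (Elt 0 y))"
    then obtain m where z: "z = mult m (Elt 0 y)" by auto
    have "z = mult (shift (- q) m) (Elt q y)"
      using z mult_Elt_shift[of "shift (- q) m" q y] by (simp add: shift_inverse)
    then show "z \<in> range (\<lambda>m. mult m (Elt q y))" by auto
  qed
qed

lemma Lrel_shift: "(Elt q y, Elt 0 y) \<in> Lrel"
  using left_ideal_shift unfolding Lrel_def by auto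

lemma mult_e_cases: "mult m e_el = Zero \<or> (\<exists>r. mult m e_el = Elt r Eg)"
proof (cases m)
  case (Elt p x)
  then show ?thesis by (cases x) auto
qed simp

lemma d_e_not_Lrel: "(d_el, e_el) \<notin> Lrel"
proof
  assume "(d_el, e_el) \<in> Lrel"
  then have ideals: "range (\<lambda>m. mult m d_el) = range (\<lambda>m. mult m e_el)"
    unfolding Lrel_def by auto
  have "d_el = mult (Elt 0 One) d_el" by simp
  then have "d_el \<in> range (\<lambda>m. mult m e_el)" using ideals by (metis rangeI)
  then obtain m where "d_el = mult m e_el" by auto
  then show False using mult_e_cases[of m] by auto
qed

text \<open>Pigeonhole: an equivalence of finite index cannot separate the values of an
  injective family indexed by an infinite type.\<close>

lemma finite_index_identifies:
  fixes f :: "'i \<Rightarrow> 'a"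
  assumes eqv: "equiv UNIV \<rho>" and fin: "finite (UNIV // \<rho>)" and inf: "infinite (UNIV :: 'i set)"
  obtains i j where "i \<noteq> j" "(f i, f j) \<in> \<rho>"
proof -
  define cls where "cls = (\<lambda>i. \<rho> `` {f i})"
  have "range cls \<subseteq> UNIV // \<rho>" unfolding cls_def quotient_def by auto
  then have "finite (range cls)" using fin finite_subset by blast
  then have "\<not> inj cls" using finite_imageD inf by blast
  then obtain i j where "i \<noteq> j" "cls i = cls j" unfolding inj_def by auto
  moreover from \<open>cls i = cls j\<close> have "(f i, f j) \<in> \<rho>"
    using eq_equiv_class_iff[OF eqv] unfolding cls_def by auto
  ultimately show ?thesis using that by blast
qed

lemma b_c_same: "mult (Elt 0 (Bg i)) (Elt 0 (Cg i)) = d_el"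
  by simp

lemma b_c_distinct: "i \<noteq> j \<Longrightarrow> mult (Elt 0 (Bg j)) (Elt 0 (Cg i)) = Elt (tau (i - j)) Eg"
  by simp

lemma finite_index_congruence_d_e:
  assumes rc: "right_congruence \<rho>" and fi: "finite_index \<rho>" and L: "Lrel \<subseteq> \<rho>"
  shows "(d_el, e_el) \<in> \<rho>"
proof -
  have eqv: "equiv UNIV \<rho>" using rc unfolding right_congruence_def by auto
  obtain i j :: int where ij: "i \<noteq> j" and "(Elt 0 (Bg i), Elt 0 (Bg j)) \<in> \<rho>"
    using finite_index_identifies[OF eqv _ infinite_UNIV_int, of "\<lambda>i. Elt 0 (Bg i)"] fi
    unfolding finite_index_def by blast
  then have "(mult (Elt 0 (Bg i)) (Elt 0 (Cg i)), mult (Elt 0 (Bg j)) (Elt 0 (Cg i))) \<in> \<rho>"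
    using rc unfolding right_congruence_def by blast
  then have d_tau: "(d_el, Elt (tau (i - j)) Eg) \<in> \<rho>"
    by (simp only: b_c_same b_c_distinct[OF ij])
  have "(Elt (tau (i - j)) Eg, e_el) \<in> \<rho>" using L Lrel_shift by blast
  with d_tau eqv show ?thesis unfolding equiv_def trans_def by blast
qed

theorem mainTheorem15:
  shows "(\<forall>\<rho>. right_congruence \<rho> \<and> finite_index \<rho> \<and> Lrel \<subseteq> \<rho> \<longrightarrow> (d_el, e_el) \<in> \<rho>)
         \<and> (d_el, e_el) \<notin> Lrel
         \<and> \<not> L_action_residually_finite"
proof (intro conjI)
  show "\<forall>\<rho>. right_congruence \<rho> \<and> finite_index \<rho> \<and> Lrel \<subseteq> \<rho> \<longrightarrow> (d_el, e_el) \<in> \<rho>"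
    using finite_index_congruence_d_e by blast
  show "(d_el, e_el) \<notin> Lrel" by (rule d_e_not_Lrel)
  show "\<not> L_action_residually_finite"
    unfolding L_action_residually_finite_def
    using d_e_not_Lrel finite_index_congruence_d_e by blast
qed

end
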